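(* Let $\alpha\in(0,2)$, $(\alpha_n)\subset(0,2)$ with $\alpha_n\to\alpha$, $w$ a probability density on $[0,1]$ continuous on $[0,1)$, and $\{\tau_n\}$ a $w$-pre-chaotic sequence. With $\tilde z\sim\tau_n$, $x=T_n(\tilde z)$, $x_0=0$, the random function $\psi_n(\xi)=x_{k-1}$ for $\frac{k-1}n\le\xi<\frac kn$ ($1\le k\le n$), and $\phi_n(\xi)=\mathbb{E}[\psi_n(\xi)]$, let $\rho_n$ and $\nu_n$ be the push-forwards of Lebesgue measure on $[0,1]$ under $\psi_n$ and $\phi_n$ respectively. Then for every $\delta>0$, $$\lim_{n\to\infty}\mathbb{P}\{W_1(\rho_n,\nu_n)>\delta\}=0.$$
   Context: $S_1^{(n)}=\{\tilde z\in[0,\infty)^n:\sum_j\tilde z_j=1\}$. $\{\tau_n\}$ is $w$-pre-chaotic if, writing $n\mathbb{E}_{\tau_n}[\tilde z_j]=w(j/n)+r_n(j)$, for each $0<\xi_*<1$ there is $C$ depending only on $\xi_*$ such that for each $\epsilon>0$ there is $n_\epsilon$ with, for all $n>n_\epsilon$ and $j,k<n\xi_*$: $|r_n(j)|<\epsilon$, $\mathrm{Var}[\tilde z_j]\le C\epsilon/n$, $|\mathrm{Cov}(\tilde z_j,\tilde z_k)|\le C\epsilon/n^2$. $T_n(\tilde z)_j=n(1-\frac{\alpha_n}2)\sum_{i=1}^j\frac{\tilde z_i}{n+1-i}+\frac{j-1}{n-1}\alpha_n$. $W_1$ is the Kantorovich–Rubinstein distance. *)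

theory Defs
  imports "HOL-Probability.Probability"
begin

definition simplex1 :: "nat \<Rightarrow> (nat \<Rightarrow> real) set" where
  "simplex1 n = {z. (\<forall>j\<in>{1..n}. 0 \<le> z j) \<and> (\<Sum>j=1..n. z j) = 1}"

definition mean_coord :: "(nat \<Rightarrow> real) measure \<Rightarrow> nat \<Rightarrow> real" where
  "mean_coord M j = (\<integral>z. z j \<partial>M)"

definition var_coord :: "(nat \<Rightarrow> real) measure \<Rightarrow> nat \<Rightarrow> real" where
  "var_coord M j = (\<integral>z. (z j - mean_coord M j)\<^sup>2 \<partial>M)"

definition cov_coord :: "(nat \<Rightarrow> real) measure \<Rightarrow> nat \<Rightarrow> nat \<Rightarrow> real" where
  "cov_coord M j k = (\<integral>z. (z j - mean_coord M j) * (z k - mean_coord M k) \<partial>M)"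

definition pre_chaotic :: "(real \<Rightarrow> real) \<Rightarrow> (nat \<Rightarrow> (nat \<Rightarrow> real) measure) \<Rightarrow> bool" where
  "pre_chaotic w \<tau> \<longleftrightarrow>
    (\<forall>\<xi>s. 0 < \<xi>s \<and> \<xi>s < 1 \<longrightarrow>
      (\<exists>C::real. \<forall>\<epsilon>>0. \<exists>n\<epsilon>::nat. \<forall>n>n\<epsilon>. \<forall>j k.
         1 \<le> j \<and> 1 \<le> k \<and> real j < real n * \<xi>s \<and> real k < real n * \<xi>s \<longrightarrow>
           \<bar>real n * mean_coord (\<tau> n) j - w (real j / real n)\<bar> < \<epsilon>
         \<and> var_coord (\<tau> n) j \<le> C * \<epsilon> / real n
         \<and> (j \<noteq> k \<longrightarrow> \<bar>cov_coord (\<tau> n) j k\<bar> \<le> C * \<epsilon> / (real n)\<^sup>2)))"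

definition Tmap :: "real \<Rightarrow> nat \<Rightarrow> (nat \<Rightarrow> real) \<Rightarrow> nat \<Rightarrow> real" where
  "Tmap a n z j = real n * (1 - a / 2) * (\<Sum>i=1..j. z i / (real n + 1 - real i))
                  + (real j - 1) / (real n - 1) * a"

text \<open>psi_n(xi) = x_(k-1) for (k-1)/n <= xi < k/n, where x = T_n(z) and x_0 = 0.\<close>
definition psi :: "real \<Rightarrow> nat \<Rightarrow> (nat \<Rightarrow> real) \<Rightarrow> real \<Rightarrow> real" where
  "psi a n z \<xi> = (let k = nat \<lfloor>real n * \<xi>\<rfloor> in if k = 0 then 0 else Tmap a n z k)"

definition phi :: "real \<Rightarrow> nat \<Rightarrow> (nat \<Rightarrow> real) measure \<Rightarrow> real \<Rightarrow> real" where
  "phi a n M \<xi> = (\<integral>z. psi a n z \<xi> \<partial>M)"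

definition W1 :: "real measure \<Rightarrow> real measure \<Rightarrow> ennreal" where
  "W1 \<mu> \<nu> = (SUP f \<in> {f :: real \<Rightarrow> real. 1-lipschitz_on UNIV f}.
                 ennreal \<bar>(\<integral>x. f x \<partial>\<mu>) - (\<integral>x. f x \<partial>\<nu>)\<bar>)"

text \<open>Outer probability (coincides with the probability on measurable sets).\<close>
definition outer_prob :: "'a measure \<Rightarrow> 'a set \<Rightarrow> real" where
  "outer_prob M S = Inf {measure M A | A. A \<in> sets M \<and> S \<inter> space M \<subseteq> A}"

abbreviation unit_leb :: "real measure" where
  "unit_leb \<equiv> restrict_space lborel {0..1}"

end

(*
  psi_n and phi_n are step functions on the grid of mesh 1/n, so the W1 distance of their
  push-forwards is at most their L1 distance, the dispersion (1/n) sum_k |x_k - E x_k|; by Markov's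
  inequality it suffices that its expectation tends to 0.  Each x_k is affine in z, with coefficient
  n (1 - alpha_n/2) / (n + 1 - i) in front of z_i.  On the bulk indices i < n xi these coefficients are
  at most 1/(1 - xi), and the pre-chaotic covariance bounds make that part of the fluctuation small in
  L2.  The remaining coordinates are estimated through their means alone; they contribute at most
  2 (1 - sum_{i < n xi} E z_i), which by the mean asymptotics and a Riemann-sum argument is close to
  2 * integral_xi^1 w, hence small for xi close to 1.
*)

theory Submission
  imports Defs
begin

section \<open>Step functions and the Kantorovich--Rubinstein distance\<close>

lemma step_fun_eq_sum_indicator:
  fixes h :: "nat \<Rightarrow> real"
  assumes n: "n \<ge> 1" and x: "x \<in> {0..1}"
  shows "h (nat \<lfloor>real n * x\<rfloor>) = (\<Sum>k\<le>n. h k * indicator ({real k / n ..< real (k+1) / n} \<inter> {0..1}) x)"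
proof -
  define k0 where "k0 = nat \<lfloor>real n * x\<rfloor>"
  have "real n * x \<le> real n" using x by (simp add: mult_left_le)
  then have k0n: "k0 \<le> n" unfolding k0_def by linarith
  have indicator: "indicator ({real k / n ..< real (k+1) / n} \<inter> {0..1}) x = (if k = k0 then 1 else (0::real))" for k
  proof -
    have "x \<in> {real k / n ..< real (k+1) / n} \<longleftrightarrow> \<lfloor>real n * x\<rfloor> = int k"
      using n by (simp add: floor_eq_iff field_simps)
    then show ?thesis using x by (auto simp: indicator_def k0_def)
  qed
  have "(\<Sum>k\<le>n. h k * indicator ({real k / n ..< real (k+1) / n} \<inter> {0..1}) x)
      = (\<Sum>k\<le>n. if k = k0 then h k else 0)"
    unfolding indicator by (intro sum.cong) auto
  also have "\<dots> = h k0" using k0n by simp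
  finally show ?thesis by (simp only: k0_def)
qed

lemma prob_space_unit_leb: "prob_space unit_leb"
  by (intro prob_space_restrict_space) auto

lemma measure_grid_cell:
  fixes n k :: nat
  assumes n: "n \<ge> 1" and k: "k \<le> n"
  shows "measure unit_leb ({real k / n ..< real (k+1) / n} \<inter> {0..1}) = (if k < n then 1 / n else 0)"
proof -
  let ?A = "{real k / n ..< real (k+1) / n} \<inter> {0..1}"
  have "measure unit_leb ?A = measure lborel ?A"
    by (subst measure_restrict_space) auto
  also have "\<dots> = (if k < n then 1 / n else 0)"
  proof (cases "k < n")
    case True
    then have "real (k+1) / n \<le> 1" using n by (simp add: field_simps)
    moreover have nonneg: "0 \<le> real k / n" by simp
    ultimately have "?A = {real k / n ..< real (k+1) / n}"
      by (auto intro: order_trans[OF nonneg])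
    then show ?thesis using True n by (simp add: field_simps)
  next
    case False
    then have "?A = {1}" using k n by (auto simp: field_simps)
    then show ?thesis using False by simp
  qed
  finally show ?thesis .
qed

lemma has_bochner_integral_step_fun:
  fixes h :: "nat \<Rightarrow> real"
  assumes n: "n \<ge> 1"
  shows "has_bochner_integral unit_leb (\<lambda>x. h (nat \<lfloor>real n * x\<rfloor>)) ((\<Sum>k<n. h k) / n)"
proof -
  define A where "A k = {real k / n ..< real (k+1) / n} \<inter> {0..1::real}" for k :: nat
  have sets: "A k \<in> sets unit_leb" for k
    by (subst sets_restrict_space_iff) (auto simp: A_def)
  have finite: "emeasure unit_leb (A k) < \<infinity>" for k
    using finite_measure.emeasure_finite[OF prob_space.finite_measure[OF prob_space_unit_leb]]
    by (simp add: less_top)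
  have "has_bochner_integral unit_leb (\<lambda>x. \<Sum>k\<le>n. h k * indicator (A k) x)
          (\<Sum>k\<le>n. h k * measure unit_leb (A k))"
    using sets finite
    by (intro has_bochner_integral_sum has_bochner_integral_mult_right has_bochner_integral_real_indicator)
  moreover have "(\<Sum>k\<le>n. h k * measure unit_leb (A k)) = (\<Sum>k<n. h k) / n"
    using measure_grid_cell[OF n]
    by (simp add: A_def lessThan_Suc_atMost[symmetric] sum_divide_distrib)
  ultimately show ?thesis
    using step_fun_eq_sum_indicator[OF n] unfolding A_def
    by (subst has_bochner_integral_cong[OF refl _ refl]) auto
qed

lemma integrable_lipschitz_comp:
  fixes f :: "'a \<Rightarrow> real" and h :: "real \<Rightarrow> real"
  assumes M: "finite_measure M" and f: "integrable M f" and h: "C-lipschitz_on UNIV h"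
  shows "integrable M (\<lambda>x. h (f x))"
proof (rule Bochner_Integration.integrable_bound)
  have "C \<ge> 0" using h by (rule lipschitz_on_nonneg)
  show "integrable M (\<lambda>x. \<bar>h 0\<bar> + C * \<bar>f x\<bar>)"
    using M f by (simp add: finite_measure.integrable_const)
  have "h \<in> borel_measurable borel"
    using h by (intro borel_measurable_continuous_onI lipschitz_on_continuous_on)
  then show "(\<lambda>x. h (f x)) \<in> borel_measurable M"
    using f by measurable
  show "AE x in M. norm (h (f x)) \<le> norm (\<bar>h 0\<bar> + C * \<bar>f x\<bar>)"
  proof (intro AE_I2)
    fix x
    have "\<bar>h (f x) - h 0\<bar> \<le> C * \<bar>f x\<bar>"
      using lipschitz_onD[OF h, of "f x" 0] by (simp add: dist_real_def)
    then show "norm (h (f x)) \<le> norm (\<bar>h 0\<bar> + C * \<bar>f x\<bar>)" using \<open>C \<ge> 0\<close> by simp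
  qed
qed

lemma W1_distr_le:
  fixes f g :: "'a \<Rightarrow> real"
  assumes M: "finite_measure M" and f: "integrable M f" and g: "integrable M g"
  shows "W1 (distr M borel f) (distr M borel g) \<le> ennreal (\<integral>x. \<bar>f x - g x\<bar> \<partial>M)"
  unfolding W1_def
proof (rule SUP_least)
  fix h :: "real \<Rightarrow> real" assume "h \<in> {h. 1-lipschitz_on UNIV h}"
  then have h: "1-lipschitz_on UNIV h" by simp
  have [measurable]: "h \<in> borel_measurable borel"
    using h by (intro borel_measurable_continuous_onI lipschitz_on_continuous_on)
  have [measurable]: "f \<in> borel_measurable M" "g \<in> borel_measurable M"
    using f g by auto
  have hf: "integrable M (\<lambda>x. h (f x))" and hg: "integrable M (\<lambda>x. h (g x))"
    using integrable_lipschitz_comp[OF M _ h] f g by blast+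
  have "\<bar>(\<integral>x. h x \<partial>distr M borel f) - (\<integral>x. h x \<partial>distr M borel g)\<bar>
      = \<bar>\<integral>x. h (f x) - h (g x) \<partial>M\<bar>"
    using hf hg by (simp add: integral_distr)
  also have "\<dots> \<le> (\<integral>x. \<bar>h (f x) - h (g x)\<bar> \<partial>M)"
    by (rule integral_abs_bound)
  also have "\<dots> \<le> (\<integral>x. \<bar>f x - g x\<bar> \<partial>M)"
  proof (rule integral_mono)
    fix x
    show "\<bar>h (f x) - h (g x)\<bar> \<le> \<bar>f x - g x\<bar>"
      using lipschitz_onD[OF h, of "f x" "g x"] by (simp add: dist_real_def)
  qed (use hf hg f g in auto)
  finally show "ennreal \<bar>(\<integral>x. h x \<partial>distr M borel f) - (\<integral>x. h x \<partial>distr M borel g)\<bar>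
      \<le> ennreal (\<integral>x. \<bar>f x - g x\<bar> \<partial>M)"
    by (rule ennreal_leI)
qed

lemma W1_step_funs_le:
  fixes g1 g2 :: "nat \<Rightarrow> real"
  assumes n: "n \<ge> 1"
  shows "W1 (distr unit_leb borel (\<lambda>x. g1 (nat \<lfloor>real n * x\<rfloor>)))
            (distr unit_leb borel (\<lambda>x. g2 (nat \<lfloor>real n * x\<rfloor>)))
         \<le> ennreal ((\<Sum>k<n. \<bar>g1 k - g2 k\<bar>) / n)"
proof -
  have finite: "finite_measure unit_leb"
    using prob_space_unit_leb by (rule prob_space.finite_measure)
  have integrable: "integrable unit_leb (\<lambda>x. g (nat \<lfloor>real n * x\<rfloor>))" for g :: "nat \<Rightarrow> real"
    using has_bochner_integral_step_fun[OF n] by (rule integrable.intros)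
  have "W1 (distr unit_leb borel (\<lambda>x. g1 (nat \<lfloor>real n * x\<rfloor>)))
            (distr unit_leb borel (\<lambda>x. g2 (nat \<lfloor>real n * x\<rfloor>)))
      \<le> ennreal (\<integral>x. \<bar>g1 (nat \<lfloor>real n * x\<rfloor>) - g2 (nat \<lfloor>real n * x\<rfloor>)\<bar> \<partial>unit_leb)"
    by (rule W1_distr_le[OF finite integrable integrable])
  also have "(\<integral>x. \<bar>g1 (nat \<lfloor>real n * x\<rfloor>) - g2 (nat \<lfloor>real n * x\<rfloor>)\<bar> \<partial>unit_leb) = (\<Sum>k<n. \<bar>g1 k - g2 k\<bar>) / n"
    using has_bochner_integral_step_fun[OF n, of "\<lambda>k. \<bar>g1 k - g2 k\<bar>"]
    by (rule has_bochner_integral_integral_eq)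
  finally show ?thesis .
qed

definition Tpoint :: "real \<Rightarrow> nat \<Rightarrow> (nat \<Rightarrow> real) \<Rightarrow> nat \<Rightarrow> real" where
  "Tpoint a n z k = (if k = 0 then 0 else Tmap a n z k)"

definition dispersion :: "real \<Rightarrow> nat \<Rightarrow> (nat \<Rightarrow> real) measure \<Rightarrow> (nat \<Rightarrow> real) \<Rightarrow> real" where
  "dispersion a n M z = (\<Sum>k<n. \<bar>Tpoint a n z k - (\<integral>y. Tpoint a n y k \<partial>M)\<bar>) / n"

lemma W1_psi_phi_le_dispersion:
  assumes "n \<ge> 1"
  shows "W1 (distr unit_leb borel (psi a n z)) (distr unit_leb borel (phi a n M))
         \<le> ennreal (dispersion a n M z)"
proof -
  have "psi a n z = (\<lambda>x. Tpoint a n z (nat \<lfloor>real n * x\<rfloor>))"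
    "phi a n M = (\<lambda>x. (\<lambda>k. \<integral>y. Tpoint a n y k \<partial>M) (nat \<lfloor>real n * x\<rfloor>))"
    by (simp_all add: fun_eq_iff psi_def phi_def Tpoint_def Let_def)
  then show ?thesis
    unfolding dispersion_def using W1_step_funs_le[OF assms] by simp
qed

lemma dispersion_nonneg: "0 \<le> dispersion a n M z"
  unfolding dispersion_def by (simp add: sum_nonneg)

section \<open>Coefficients of \<open>T\<^sub>n\<close> and finite sums\<close>

definition Tcoeff :: "real \<Rightarrow> nat \<Rightarrow> nat \<Rightarrow> real" where
  "Tcoeff a n i = n * (1 - a / 2) / (n + 1 - i)"

lemma Tmap_eq_sum:
  "Tmap a n z k = (\<Sum>i=1..k. Tcoeff a n i * z i) + (real k - 1) / (real n - 1) * a"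
  unfolding Tmap_def Tcoeff_def by (simp add: sum_distrib_left)

definition bulk :: "nat \<Rightarrow> real \<Rightarrow> nat set" where
  "bulk n \<xi> = {i \<in> {1..n}. real i < real n * \<xi>}"

lemma Tcoeff_nonneg: "0 \<le> a \<Longrightarrow> a \<le> 2 \<Longrightarrow> i \<le> n \<Longrightarrow> 0 \<le> Tcoeff a n i"
  unfolding Tcoeff_def by simp

lemma Tcoeff_bulk_le:
  assumes "0 \<le> a" "a \<le> 2" "\<xi> < 1" "i \<in> bulk n \<xi>"
  shows "Tcoeff a n i \<le> 1 / (1 - \<xi>)"
proof -
  have i: "1 \<le> i" "real i < real n * \<xi>" using assms(4) by (auto simp: bulk_def)
  then have n: "0 < real n" by (cases "n = 0") auto
  then have pos: "0 < real n * (1 - \<xi>)" using assms(3) by simp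
  have "Tcoeff a n i \<le> n / (n * (1 - \<xi>))"
    unfolding Tcoeff_def using assms(1,2) i pos
    by (intro frac_le) (auto simp: algebra_simps)
  then show ?thesis using n by simp
qed

lemma Tcoeff_tail_le:
  assumes "0 \<le> a" "a \<le> 2" "i \<le> n"
  shows "real (n - i) * Tcoeff a n i \<le> n"
proof -
  have "real (n - i) * Tcoeff a n i = n * (1 - a / 2) * ((n - i) / (n + 1 - i))"
    using assms(3) by (simp add: Tcoeff_def of_nat_diff algebra_simps)
  also have "\<dots> \<le> real n * 1 * 1"
    using assms by (intro mult_mono) (auto simp: divide_le_eq_1)
  finally show ?thesis by simp
qed

lemma sum_partial_sums_swap:
  fixes f :: "nat \<Rightarrow> real"
  shows "(\<Sum>k<n. \<Sum>i=1..k. f i) = (\<Sum>i=1..n. real (n - i) * f i)"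
proof (induction n)
  case (Suc n)
  have "(\<Sum>k<Suc n. \<Sum>i=1..k. f i) = (\<Sum>i=1..n. real (n - i) * f i + f i)"
    using Suc by (simp add: sum.distrib)
  also have "\<dots> = (\<Sum>i=1..n. real (Suc n - i) * f i)"
    by (intro sum.cong refl) (auto simp: of_nat_diff algebra_simps)
  finally show ?case by simp
qed simp

lemma sum_partial_tail_sums_le:
  fixes c m :: "nat \<Rightarrow> real"
  assumes m: "\<And>i. i \<in> {1..n} \<Longrightarrow> 0 \<le> m i"
    and c: "\<And>i. i \<in> {1..n} \<Longrightarrow> real (n - i) * c i \<le> C"
  shows "(\<Sum>k<n. \<Sum>i\<in>{1..k} - J. c i * m i) \<le> C * (\<Sum>i\<in>{1..n} - J. m i)"
proof -
  define g where "g i = (if i \<in> J then 0 else c i * m i)" for i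
  have "(\<Sum>k<n. \<Sum>i\<in>{1..k} - J. c i * m i) = (\<Sum>k<n. \<Sum>i=1..k. g i)"
    by (simp add: g_def sum.If_cases Diff_eq)
  also have "\<dots> = (\<Sum>i=1..n. real (n - i) * g i)"
    by (rule sum_partial_sums_swap)
  also have "\<dots> \<le> (\<Sum>i=1..n. C * (if i \<in> J then 0 else m i))"
    using m c by (intro sum_mono) (auto simp: g_def mult.assoc[symmetric] mult_right_mono)
  also have "\<dots> = C * (\<Sum>i\<in>{1..n} - J. m i)"
    by (simp add: sum_distrib_left[symmetric] sum.If_cases Diff_eq)
  finally show ?thesis .
qed

lemma sum_ge_of_scaled_approx:
  fixes m v :: "nat \<Rightarrow> real" and n :: nat
  assumes B: "B \<subseteq> {1..n}" and \<epsilon>: "0 \<le> \<epsilon>" and approx: "\<And>j. j \<in> B \<Longrightarrow> \<bar>n * m j - v j\<bar> < \<epsilon>"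
  shows "(\<Sum>j\<in>B. v j) / n - \<epsilon> \<le> (\<Sum>j\<in>B. m j)"
proof -
  have "finite B" using B finite_subset by blast
  have "real (card B) \<le> n" using card_mono[OF _ B] by simp
  then have "real (card B) * \<epsilon> / n \<le> \<epsilon>"
    using \<epsilon> by (cases "n = 0") (auto simp: field_simps mult_left_mono)
  then have "(\<Sum>j\<in>B. v j) / n - \<epsilon> \<le> (\<Sum>j\<in>B. (v j - \<epsilon>) / n)"
    using \<open>finite B\<close> by (simp add: sum_subtractf sum_divide_distrib[symmetric] diff_divide_distrib)
  also have "\<dots> \<le> (\<Sum>j\<in>B. m j)"
  proof (rule sum_mono)
    fix j assume j: "j \<in> B"
    then have "0 < real n" using B by auto
    moreover have "v j - \<epsilon> < n * m j" using approx[OF j] by linarith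
    ultimately show "(v j - \<epsilon>) / n \<le> m j" by (simp add: field_simps)
  qed
  finally show ?thesis .
qed

section \<open>Laws on the simplex\<close>

lemma (in prob_space) expectation_abs_le_sqrt_second_moment:
  fixes X :: "'a \<Rightarrow> real"
  assumes "integrable M X" "integrable M (\<lambda>x. (X x)\<^sup>2)"
  shows "expectation (\<lambda>x. \<bar>X x\<bar>) \<le> sqrt (expectation (\<lambda>x. (X x)\<^sup>2))"
proof (rule real_le_rsqrt)
  have "0 \<le> variance (\<lambda>x. \<bar>X x\<bar>)" by (rule variance_positive)
  also have "\<dots> = expectation (\<lambda>x. (X x)\<^sup>2) - (expectation (\<lambda>x. \<bar>X x\<bar>))\<^sup>2"
    using assms by (subst variance_eq) auto
  finally show "(expectation (\<lambda>x. \<bar>X x\<bar>))\<^sup>2 \<le> expectation (\<lambda>x. (X x)\<^sup>2)" by simp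
qed

lemma outer_prob_le:
  assumes "A \<in> sets M" "S \<inter> space M \<subseteq> A"
  shows "outer_prob M S \<le> measure M A"
  unfolding outer_prob_def
  by (rule cInf_lower) (use assms in \<open>auto intro!: bdd_belowI[where m=0]\<close>)

lemma outer_prob_nonneg: "0 \<le> outer_prob M S"
  unfolding outer_prob_def by (rule cInf_greatest) auto

locale simplex_law = prob_space M for M :: "(nat \<Rightarrow> real) measure" +
  fixes n :: nat
  assumes sets_eq: "sets M = sets (PiM {1..n} (\<lambda>_. borel))"
    and AE_simplex: "AE z in M. z \<in> simplex1 n"
begin

lemma measurable_coord [measurable]: "(\<lambda>z. z i) \<in> borel_measurable M"
proof -
  have "(\<lambda>z. z i) \<in> borel_measurable (PiM {1..n} (\<lambda>_. borel :: real measure))"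
  proof (cases "i \<in> {1..n}")
    case False
    then have "z i = undefined" if "z \<in> space (PiM {1..n} (\<lambda>_. borel :: real measure))" for z
      using that by (auto simp: space_PiM PiE_def extensional_def)
    then show ?thesis by (subst measurable_cong[where g = "\<lambda>_. undefined"]) auto
  qed (rule measurable_component_singleton)
  then show ?thesis by (subst measurable_cong_sets[OF sets_eq refl])
qed

lemma AE_coord_bound:
  assumes i: "i \<in> {1..n}" shows "AE z in M. 0 \<le> z i \<and> z i \<le> 1"
  using AE_simplex
proof eventually_elim
  case (elim z)
  then have nonneg: "\<forall>j\<in>{1..n}. 0 \<le> z j" and sum: "(\<Sum>j=1..n. z j) = 1"
    by (auto simp: simplex1_def)
  have "z i \<le> (\<Sum>j=1..n. z j)" using nonneg i by (intro member_le_sum) auto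
  then show ?case using nonneg i sum by auto
qed

lemma integrable_coord:
  assumes "i \<in> {1..n}" shows "integrable M (\<lambda>z. z i)"
proof (rule integrable_const_bound[where B=1])
  show "AE z in M. norm (z i) \<le> 1" using AE_coord_bound[OF assms] by eventually_elim auto
qed simp

lemma mean_coord_bounds:
  assumes "i \<in> {1..n}" shows "0 \<le> mean_coord M i" "mean_coord M i \<le> 1"
proof -
  show "0 \<le> mean_coord M i"
    unfolding mean_coord_def using AE_coord_bound[OF assms] by (intro integral_nonneg_AE) auto
  have "mean_coord M i \<le> expectation (\<lambda>_. 1)"
    unfolding mean_coord_def using AE_coord_bound[OF assms] integrable_coord[OF assms]
    by (intro integral_mono_AE) auto
  then show "mean_coord M i \<le> 1" by (simp add: prob_space)
qed

lemma integral_abs_coord: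
  assumes "i \<in> {1..n}" shows "expectation (\<lambda>z. \<bar>z i\<bar>) = mean_coord M i"
  unfolding mean_coord_def
  by (rule integral_cong_AE) (use AE_coord_bound[OF assms] in \<open>auto elim!: eventually_mono\<close>)

lemma sum_mean_coord: "(\<Sum>i=1..n. mean_coord M i) = 1"
proof -
  have "(\<Sum>i=1..n. mean_coord M i) = expectation (\<lambda>z. \<Sum>i=1..n. z i)"
    unfolding mean_coord_def using integrable_coord by (subst Bochner_Integration.integral_sum) auto
  also have "\<dots> = expectation (\<lambda>_. 1)"
    by (rule integral_cong_AE) (use AE_simplex in \<open>auto simp: simplex1_def elim!: eventually_mono\<close>)
  finally show ?thesis by (simp add: prob_space)
qed

lemma integrable_centered_prod:
  assumes i: "i \<in> {1..n}" and j: "j \<in> {1..n}"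
  shows "integrable M (\<lambda>z. (z i - mean_coord M i) * (z j - mean_coord M j))"
proof (rule integrable_const_bound[where B=1])
  show "AE z in M. norm ((z i - mean_coord M i) * (z j - mean_coord M j)) \<le> 1"
    using AE_coord_bound[OF i] AE_coord_bound[OF j]
  proof eventually_elim
    case (elim z)
    then have "\<bar>z i - mean_coord M i\<bar> \<le> 1" "\<bar>z j - mean_coord M j\<bar> \<le> 1"
      using mean_coord_bounds[OF i] mean_coord_bounds[OF j] by auto
    then show ?case by (simp add: abs_mult mult_le_one)
  qed
qed simp

lemma second_moment_centered_sum:
  assumes S: "S \<subseteq> {1..n}"
  shows "has_bochner_integral M (\<lambda>z. (\<Sum>i\<in>S. c i * (z i - mean_coord M i))\<^sup>2)
           (\<Sum>i\<in>S. \<Sum>j\<in>S. c i * c j * cov_coord M i j)"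
proof -
  have square: "(\<Sum>i\<in>S. c i * (z i - mean_coord M i))\<^sup>2
      = (\<Sum>i\<in>S. \<Sum>j\<in>S. c i * c j * ((z i - mean_coord M i) * (z j - mean_coord M j)))" for z
    unfolding power2_eq_square sum_product by (simp add: ac_simps)
  show ?thesis
    unfolding square cov_coord_def
    by (intro has_bochner_integral_sum has_bochner_integral_mult_right has_bochner_integral_integrable)
      (use S in \<open>auto intro!: integrable_centered_prod\<close>)
qed

lemma integrable_centered_sum:
  assumes "S \<subseteq> {1..n}"
  shows "integrable M (\<lambda>z. \<Sum>i\<in>S. c i * (z i - mean_coord M i))"
  using assms integrable_coord by (intro Bochner_Integration.integrable_sum) auto

lemma second_moment_centered_sum_le:
  assumes S: "S \<subseteq> {1..n}" and K: "K \<ge> 0"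
    and c: "\<And>i. i \<in> S \<Longrightarrow> \<bar>c i\<bar> \<le> L"
    and var: "\<And>j. j \<in> S \<Longrightarrow> var_coord M j \<le> K / n"
    and cov: "\<And>j k. j \<in> S \<Longrightarrow> k \<in> S \<Longrightarrow> j \<noteq> k \<Longrightarrow> \<bar>cov_coord M j k\<bar> \<le> K / (real n)\<^sup>2"
  shows "expectation (\<lambda>z. (\<Sum>i\<in>S. c i * (z i - mean_coord M i))\<^sup>2) \<le> 2 * K * L\<^sup>2"
proof -
  have "finite S" using S finite_subset by blast
  have card: "real (card S) \<le> n" using card_mono[OF _ S] by simp
  have "expectation (\<lambda>z. (\<Sum>i\<in>S. c i * (z i - mean_coord M i))\<^sup>2)
      = (\<Sum>i\<in>S. \<Sum>j\<in>S. c i * c j * cov_coord M i j)"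
    using second_moment_centered_sum[OF S] by (rule has_bochner_integral_integral_eq)
  also have "\<dots> \<le> (\<Sum>i\<in>S. \<Sum>j\<in>S. L\<^sup>2 * ((if i = j then K / n else 0) + K / (real n)\<^sup>2))"
  proof (intro sum_mono)
    fix i j assume i: "i \<in> S" and j: "j \<in> S"
    have "\<bar>cov_coord M i j\<bar> \<le> (if i = j then K / n else 0) + K / (real n)\<^sup>2"
    proof (cases "i = j")
      case True
      have "0 \<le> var_coord M i"
        unfolding var_coord_def by (intro integral_nonneg_AE AE_I2) simp
      moreover have "cov_coord M i i = var_coord M i"
        unfolding cov_coord_def var_coord_def by (simp add: power2_eq_square)
      moreover have "0 \<le> K / (real n)\<^sup>2" using K by simp
      ultimately show ?thesis using True var[OF i] by simp
    qed (use cov[OF i j] in simp)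
    then have "\<bar>c i * c j * cov_coord M i j\<bar> \<le> L * L * ((if i = j then K / n else 0) + K / (real n)\<^sup>2)"
      unfolding abs_mult using c[OF i] c[OF j] by (intro mult_mono) auto
    then show "c i * c j * cov_coord M i j \<le> L\<^sup>2 * ((if i = j then K / n else 0) + K / (real n)\<^sup>2)"
      by (simp add: power2_eq_square)
  qed
  also have "\<dots> = L\<^sup>2 * (K * (card S / n) + K * (card S / n)\<^sup>2)"
    using \<open>finite S\<close>
    by (simp add: sum.distrib sum_distrib_left[symmetric] power2_eq_square algebra_simps)
  also have "\<dots> \<le> L\<^sup>2 * (K + K)"
  proof -
    have "0 \<le> real (card S) / n" "real (card S) / n \<le> 1"
      using card by (cases "n = 0"; simp add: field_simps)+
    then show ?thesis using K by (intro mult_left_mono add_mono mult_left_le power_le_one) auto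
  qed
  finally show ?thesis by (simp add: algebra_simps)
qed

lemma expectation_abs_centered_sum_le:
  assumes S: "S \<subseteq> {1..n}" and K: "K \<ge> 0" and L: "L \<ge> 0"
    and c: "\<And>i. i \<in> S \<Longrightarrow> \<bar>c i\<bar> \<le> L"
    and var: "\<And>j. j \<in> S \<Longrightarrow> var_coord M j \<le> K / n"
    and cov: "\<And>j k. j \<in> S \<Longrightarrow> k \<in> S \<Longrightarrow> j \<noteq> k \<Longrightarrow> \<bar>cov_coord M j k\<bar> \<le> K / (real n)\<^sup>2"
  shows "expectation (\<lambda>z. \<bar>\<Sum>i\<in>S. c i * (z i - mean_coord M i)\<bar>) \<le> sqrt (2 * K) * L"
proof -
  have "expectation (\<lambda>z. \<bar>\<Sum>i\<in>S. c i * (z i - mean_coord M i)\<bar>)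
      \<le> sqrt (expectation (\<lambda>z. (\<Sum>i\<in>S. c i * (z i - mean_coord M i))\<^sup>2))"
    using integrable_centered_sum[OF S] integrable.intros[OF second_moment_centered_sum[OF S]]
    by (rule expectation_abs_le_sqrt_second_moment)
  also have "\<dots> \<le> sqrt (2 * K * L\<^sup>2)"
    using second_moment_centered_sum_le[OF S K c var cov] by simp
  also have "\<dots> = sqrt (2 * K) * L"
    using L by (simp add: real_sqrt_mult)
  finally show ?thesis .
qed

lemma expectation_abs_centered_sum_split:
  assumes S: "S \<subseteq> {1..n}" and c: "\<And>i. i \<in> S - J \<Longrightarrow> 0 \<le> c i"
  shows "expectation (\<lambda>z. \<bar>\<Sum>i\<in>S. c i * (z i - mean_coord M i)\<bar>)
       \<le> expectation (\<lambda>z. \<bar>\<Sum>i\<in>S \<inter> J. c i * (z i - mean_coord M i)\<bar>)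
          + 2 * (\<Sum>i\<in>S - J. c i * mean_coord M i)"
proof -
  have "finite S" using S finite_subset by blast
  have coord: "i \<in> {1..n}" if "i \<in> S - J" for i using S that by auto
  have pointwise: "\<bar>\<Sum>i\<in>S. c i * (z i - mean_coord M i)\<bar>
      \<le> \<bar>\<Sum>i\<in>S \<inter> J. c i * (z i - mean_coord M i)\<bar> + (\<Sum>i\<in>S - J. c i * (\<bar>z i\<bar> + mean_coord M i))" for z
  proof -
    have "(\<Sum>i\<in>S. c i * (z i - mean_coord M i))
        = (\<Sum>i\<in>S \<inter> J. c i * (z i - mean_coord M i)) + (\<Sum>i\<in>S - J. c i * (z i - mean_coord M i))"
      using \<open>finite S\<close> by (rule sum.Int_Diff)
    moreover have "\<bar>\<Sum>i\<in>S - J. c i * (z i - mean_coord M i)\<bar> \<le> (\<Sum>i\<in>S - J. c i * (\<bar>z i\<bar> + mean_coord M i))"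
    proof (rule order_trans[OF sum_abs sum_mono])
      fix i assume "i \<in> S - J"
      then have "0 \<le> c i" "0 \<le> mean_coord M i" using c mean_coord_bounds coord by auto
      then show "\<bar>c i * (z i - mean_coord M i)\<bar> \<le> c i * (\<bar>z i\<bar> + mean_coord M i)"
        by (simp add: abs_mult mult_left_mono)
    qed
    ultimately show ?thesis by linarith
  qed
  have integrable_rest: "integrable M (\<lambda>z. \<Sum>i\<in>S - J. c i * (\<bar>z i\<bar> + mean_coord M i))"
    using coord integrable_coord by (intro Bochner_Integration.integrable_sum) auto
  have integrable_bulk: "integrable M (\<lambda>z. \<bar>\<Sum>i\<in>S \<inter> J. c i * (z i - mean_coord M i)\<bar>)"
    using S by (intro integrable_abs integrable_centered_sum) auto
  have "expectation (\<lambda>z. \<bar>\<Sum>i\<in>S. c i * (z i - mean_coord M i)\<bar>)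
      \<le> expectation (\<lambda>z. \<bar>\<Sum>i\<in>S \<inter> J. c i * (z i - mean_coord M i)\<bar>
            + (\<Sum>i\<in>S - J. c i * (\<bar>z i\<bar> + mean_coord M i)))"
    using integrable_centered_sum[OF S] integrable_bulk integrable_rest pointwise
    by (intro integral_mono) auto
  also have "\<dots> = expectation (\<lambda>z. \<bar>\<Sum>i\<in>S \<inter> J. c i * (z i - mean_coord M i)\<bar>)
      + (\<Sum>i\<in>S - J. c i * (expectation (\<lambda>z. \<bar>z i\<bar>) + mean_coord M i))"
    using integrable_bulk integrable_rest coord integrable_coord
    by (simp add: Bochner_Integration.integral_sum prob_space)
  also have "\<dots> = expectation (\<lambda>z. \<bar>\<Sum>i\<in>S \<inter> J. c i * (z i - mean_coord M i)\<bar>)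
      + 2 * (\<Sum>i\<in>S - J. c i * mean_coord M i)"
    using coord integral_abs_coord by (simp add: sum_distrib_left mult_ac)
  finally show ?thesis .
qed

lemma integrable_linear:
  assumes "S \<subseteq> {1..n}" shows "integrable M (\<lambda>z. \<Sum>i\<in>S. c i * z i)"
  using assms integrable_coord by (intro Bochner_Integration.integrable_sum) auto

lemma expectation_linear:
  assumes "S \<subseteq> {1..n}" shows "expectation (\<lambda>z. \<Sum>i\<in>S. c i * z i) = (\<Sum>i\<in>S. c i * mean_coord M i)"
  using assms integrable_coord by (subst Bochner_Integration.integral_sum) (auto simp: mean_coord_def)

lemma integrable_Tpoint:
  assumes "k \<le> n" shows "integrable M (\<lambda>z. Tpoint a n z k)"
proof (cases "k = 0")
  case False
  have "integrable M (\<lambda>z. (\<Sum>i=1..k. Tcoeff a n i * z i) + (real k - 1) / (real n - 1) * a)"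
    using assms by (intro Bochner_Integration.integrable_add integrable_linear) auto
  with False show ?thesis by (simp add: Tpoint_def Tmap_eq_sum)
qed (simp add: Tpoint_def)

lemma Tpoint_centered:
  assumes "k \<le> n"
  shows "Tpoint a n z k - expectation (\<lambda>y. Tpoint a n y k)
    = (\<Sum>i=1..k. Tcoeff a n i * (z i - mean_coord M i))"
proof (cases "k = 0")
  case False
  have "{1..k} \<subseteq> {1..n}" using assms by auto
  with False show ?thesis
    unfolding Tpoint_def Tmap_eq_sum using integrable_linear expectation_linear
    by (simp add: prob_space sum_subtractf right_diff_distrib)
qed (simp add: Tpoint_def)

lemma integrable_dispersion: "integrable M (dispersion a n M)"
  unfolding dispersion_def using integrable_Tpoint
  by (intro Bochner_Integration.integrable_divide Bochner_Integration.integrable_sum integrable_abs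
      Bochner_Integration.integrable_diff) auto

lemma expectation_dispersion_le:
  assumes n: "n \<ge> 1" and a: "0 \<le> a" "a \<le> 2" and \<xi>: "\<xi> < 1" and K: "K \<ge> 0"
    and var: "\<And>j. j \<in> bulk n \<xi> \<Longrightarrow> var_coord M j \<le> K / n"
    and cov: "\<And>j k. j \<in> bulk n \<xi> \<Longrightarrow> k \<in> bulk n \<xi> \<Longrightarrow> j \<noteq> k \<Longrightarrow> \<bar>cov_coord M j k\<bar> \<le> K / (real n)\<^sup>2"
  shows "expectation (dispersion a n M)
    \<le> sqrt (2 * K) / (1 - \<xi>) + 2 * (1 - (\<Sum>i\<in>bulk n \<xi>. mean_coord M i))"
proof -
  let ?B = "bulk n \<xi>"
  \<comment> \<open>Bulk coordinates are controlled in L2, tail coordinates only through their means;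
    summed over k, each tail index i is counted n - i times.\<close>
  define T where "T k = (\<Sum>i\<in>{1..k} - ?B. Tcoeff a n i * mean_coord M i)" for k
  have bulk: "?B \<subseteq> {1..n}" by (auto simp: bulk_def)
  have summand: "expectation (\<lambda>z. \<bar>Tpoint a n z k - expectation (\<lambda>y. Tpoint a n y k)\<bar>)
      \<le> sqrt (2 * K) / (1 - \<xi>) + 2 * T k" if "k \<le> n" for k
  proof -
    have S: "{1..k} \<subseteq> {1..n}" "{1..k} \<inter> ?B \<subseteq> {1..n}" using that by auto
    have "expectation (\<lambda>z. \<bar>Tpoint a n z k - expectation (\<lambda>y. Tpoint a n y k)\<bar>)
        = expectation (\<lambda>z. \<bar>\<Sum>i=1..k. Tcoeff a n i * (z i - mean_coord M i)\<bar>)"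
      using Tpoint_centered[OF that] by simp
    also have "\<dots> \<le> expectation (\<lambda>z. \<bar>\<Sum>i\<in>{1..k} \<inter> ?B. Tcoeff a n i * (z i - mean_coord M i)\<bar>) + 2 * T k"
      unfolding T_def using S that a by (intro expectation_abs_centered_sum_split Tcoeff_nonneg) auto
    also have "\<dots> \<le> sqrt (2 * K) * (1 / (1 - \<xi>)) + 2 * T k"
      using S a \<xi> K var cov Tcoeff_nonneg Tcoeff_bulk_le
      by (intro add_right_mono expectation_abs_centered_sum_le) auto
    finally show ?thesis by simp
  qed
  have "expectation (dispersion a n M)
      = (\<Sum>k<n. expectation (\<lambda>z. \<bar>Tpoint a n z k - expectation (\<lambda>y. Tpoint a n y k)\<bar>)) / n"
    unfolding dispersion_def using integrable_Tpoint
    by (simp add: Bochner_Integration.integral_sum)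
  also have "\<dots> \<le> (\<Sum>k<n. sqrt (2 * K) / (1 - \<xi>) + 2 * T k) / n"
    using summand by (intro divide_right_mono sum_mono) auto
  also have "\<dots> = sqrt (2 * K) / (1 - \<xi>) + 2 * (\<Sum>k<n. T k) / n"
    using n by (simp add: sum.distrib sum_distrib_left[symmetric] add_divide_distrib)
  also have "(\<Sum>k<n. T k) \<le> n * (\<Sum>i\<in>{1..n} - ?B. mean_coord M i)"
    unfolding T_def using a mean_coord_bounds by (intro sum_partial_tail_sums_le Tcoeff_tail_le) auto
  also have "(\<Sum>i\<in>{1..n} - ?B. mean_coord M i) = 1 - (\<Sum>i\<in>?B. mean_coord M i)"
    using bulk sum_mean_coord by (simp add: sum_diff)
  finally show ?thesis using n by (simp add: divide_right_mono)
qed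

lemma expectation_dispersion_le_Riemann_sum:
  assumes n: "n \<ge> 1" and a: "0 \<le> a" "a \<le> 2" and \<xi>: "\<xi> < 1" and K: "K \<ge> 0" and \<epsilon>: "\<epsilon> \<ge> 0"
    and mean: "\<And>j. j \<in> bulk n \<xi> \<Longrightarrow> \<bar>n * mean_coord M j - w (real j / n)\<bar> < \<epsilon>"
    and var: "\<And>j. j \<in> bulk n \<xi> \<Longrightarrow> var_coord M j \<le> K / n"
    and cov: "\<And>j k. j \<in> bulk n \<xi> \<Longrightarrow> k \<in> bulk n \<xi> \<Longrightarrow> j \<noteq> k \<Longrightarrow> \<bar>cov_coord M j k\<bar> \<le> K / (real n)\<^sup>2"
  shows "expectation (dispersion a n M)
    \<le> sqrt (2 * K) / (1 - \<xi>) + 2 * (1 + \<epsilon> - (\<Sum>i\<in>bulk n \<xi>. w (real i / n)) / n)"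
proof -
  have "(\<Sum>i\<in>bulk n \<xi>. w (real i / n)) / n - \<epsilon> \<le> (\<Sum>i\<in>bulk n \<xi>. mean_coord M i)"
    using \<epsilon> by (intro sum_ge_of_scaled_approx[OF _ _ mean]) (auto simp: bulk_def)
  then have "2 * (1 - (\<Sum>i\<in>bulk n \<xi>. mean_coord M i)) \<le> 2 * (1 + \<epsilon> - (\<Sum>i\<in>bulk n \<xi>. w (real i / n)) / n)"
    by simp
  with expectation_dispersion_le[OF n a \<xi> K var cov] show ?thesis
    by (rule order_trans[OF _ add_left_mono])
qed

lemma outer_prob_W1_gt_le:
  assumes n: "n \<ge> 1" and \<delta>: "\<delta> > 0"
  shows "outer_prob M {z \<in> space M.
           W1 (distr unit_leb borel (psi a n z)) (distr unit_leb borel (phi a n M)) > ennreal \<delta>}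
    \<le> expectation (dispersion a n M) / \<delta>"
proof -
  have [measurable]: "dispersion a n M \<in> borel_measurable M"
    using integrable_dispersion by (rule borel_measurable_integrable)
  have "{z \<in> space M. W1 (distr unit_leb borel (psi a n z)) (distr unit_leb borel (phi a n M)) > ennreal \<delta>}
      \<inter> space M \<subseteq> {z \<in> space M. \<delta> \<le> dispersion a n M z}"
  proof safe
    fix z assume "ennreal \<delta> < W1 (distr unit_leb borel (psi a n z)) (distr unit_leb borel (phi a n M))"
    also have "\<dots> \<le> ennreal (dispersion a n M z)"
      by (rule W1_psi_phi_le_dispersion[OF n])
    finally show "\<delta> \<le> dispersion a n M z" using \<delta> by (simp add: ennreal_less_iff)
  qed
  then have "outer_prob M {z \<in> space M.
           W1 (distr unit_leb borel (psi a n z)) (distr unit_leb borel (phi a n M)) > ennreal \<delta>}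
      \<le> measure M {z \<in> space M. \<delta> \<le> dispersion a n M z}"
    by (intro outer_prob_le) measurable
  also have "\<dots> \<le> expectation (dispersion a n M) / \<delta>"
    using integrable_dispersion \<delta> dispersion_nonneg
    by (intro integral_Markov_inequality_measure[where A="space M"]) auto
  finally show ?thesis .
qed

end

section \<open>Riemann sums\<close>

lemma integral_grid_split:
  fixes f :: "real \<Rightarrow> real" and n :: nat
  assumes "f integrable_on {0..real q / n}"
  shows "integral {0..real q / n} f = (\<Sum>i<q. integral {real i / n..real (i+1) / n} f)"
  using assms
proof (induction q)
  case (Suc q)
  have le: "real q / n \<le> real (Suc q) / n" by (simp add: divide_right_mono)
  then have "f integrable_on {0..real q / n}"
    by (intro integrable_on_subinterval[OF Suc.prems]) auto
  moreover have "integral {0..real q / n} f + integral {real q / n..real (Suc q) / n} f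
      = integral {0..real (Suc q) / n} f"
    using Suc.prems le by (intro Henstock_Kurzweil_Integration.integral_combine) auto
  ultimately show ?case using Suc.IH by simp
qed simp

lemma integral_le_left_Riemann_sum:
  fixes w :: "real \<Rightarrow> real" and n :: nat
  assumes w: "w integrable_on {0..real q / n}"
    and modulus: "\<And>x y. x \<in> {0..real q / n} \<Longrightarrow> y \<in> {0..real q / n} \<Longrightarrow> \<bar>x - y\<bar> \<le> 1 / n \<Longrightarrow> w x \<le> w y + e"
  shows "integral {0..real q / n} w \<le> (\<Sum>i<q. w (real i / n)) / n + real q * e / n"
proof -
  have "integral {0..real q / n} w = (\<Sum>i<q. integral {real i / n..real (i+1) / n} w)"
    using w by (rule integral_grid_split)
  also have "\<dots> \<le> (\<Sum>i<q. (w (real i / n) + e) / n)"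
  proof (rule sum_mono)
    fix i assume "i \<in> {..<q}"
    then have "real (i+1) / n \<le> real q / n" by (simp add: divide_right_mono)
    then have sub: "{real i / n..real (i+1) / n} \<subseteq> {0..real q / n}" by auto
    have width: "real (i+1) / n - real i / n = 1 / n"
      by (simp add: diff_divide_distrib[symmetric])
    have "integral {real i / n..real (i+1) / n} w \<le> integral {real i / n..real (i+1) / n} (\<lambda>_. w (real i / n) + e)"
    proof (rule integral_le)
      show "w integrable_on {real i / n..real (i+1) / n}"
        using w sub by (rule integrable_on_subinterval)
      fix x assume x: "x \<in> {real i / n..real (i+1) / n}"
      have "real i / n \<in> {real i / n..real (i+1) / n}"
        by (simp add: divide_right_mono)
      then show "w x \<le> w (real i / n) + e"
        using x width by (intro modulus subsetD[OF sub]) auto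
    qed (rule integrable_const_ivl)
    also have "\<dots> = (w (real i / n) + e) / n"
      using width by (simp add: divide_right_mono)
    finally show "integral {real i / n..real (i+1) / n} w \<le> (w (real i / n) + e) / n" .
  qed
  also have "\<dots> = (\<Sum>i<q. w (real i / n)) / n + real q * e / n"
    by (simp add: sum.distrib add_divide_distrib sum_divide_distrib)
  finally show ?thesis .
qed

lemma bulk_eq_atLeastLessThan:
  assumes "\<xi> \<le> 1"
  shows "bulk n \<xi> = {1..<nat \<lceil>real n * \<xi>\<rceil>}"
proof -
  have "real i < real n * \<xi> \<Longrightarrow> i \<le> n" for i
    using assms mult_left_le[of \<xi> "real n"] by (cases "\<xi> < 0") (auto simp: mult_neg_pos)
  then show ?thesis by (auto simp: bulk_def zless_nat_eq_int_zless less_ceiling_iff)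
qed

lemma exists_integral_initial_gt:
  fixes w :: "real \<Rightarrow> real"
  assumes w: "w integrable_on {0..1}" and e: "e > 0"
  obtains \<xi> where "0 < \<xi>" "\<xi> < 1" "integral {0..1} w - e < integral {0..\<xi>} w"
proof -
  have "continuous_on {0..1} (\<lambda>x. integral {0..x} w)"
    using w by (rule indefinite_integral_continuous_1)
  then obtain d where d: "d > 0"
    and close: "\<And>x. x \<in> {0..1} \<Longrightarrow> dist x 1 < d \<Longrightarrow> dist (integral {0..x} w) (integral {0..1} w) < e"
    using e unfolding continuous_on_iff by (metis atLeastAtMost_iff order_refl zero_le_one)
  define \<xi> where "\<xi> = max (1 / 2) (1 - d / 2)"
  have \<xi>: "0 < \<xi>" "\<xi> < 1" using d by (auto simp: \<xi>_def)
  moreover have "dist (integral {0..\<xi>} w) (integral {0..1} w) < e"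
    using d \<xi> by (intro close) (auto simp: \<xi>_def dist_real_def)
  ultimately show ?thesis by (intro that) (auto simp: dist_real_def)
qed

lemma integral_le_bulk_Riemann_sum:
  fixes w :: "real \<Rightarrow> real" and n :: nat
  assumes w0: "\<And>x. x \<in> {0..b} \<Longrightarrow> 0 \<le> w x" and w: "w integrable_on {0..b}"
    and \<xi>: "0 < \<xi>" and b: "b \<le> 1" and n: "n \<ge> 1" and gap: "1 / n \<le> b - \<xi>"
    and modulus: "\<And>x y. x \<in> {0..b} \<Longrightarrow> y \<in> {0..b} \<Longrightarrow> \<bar>x - y\<bar> \<le> 1 / n \<Longrightarrow> w x \<le> w y + e"
    and e: "0 \<le> e"
  shows "integral {0..\<xi>} w \<le> (w 0 + (\<Sum>i\<in>bulk n \<xi>. w (real i / n))) / n + e"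
proof -
  define q where "q = nat \<lceil>real n * \<xi>\<rceil>"
  have pos: "0 < real n * \<xi>" using \<xi> n by simp
  then have "real q = \<lceil>real n * \<xi>\<rceil>"
    unfolding q_def by (intro of_nat_nat) simp
  then have q: "real n * \<xi> \<le> real q" "real q < real n * \<xi> + 1"
    using ceiling_correct[of "real n * \<xi>"] by linarith+
  have "0 < real n" using n by simp
  have \<xi>_le: "\<xi> \<le> real q / n" using q \<open>0 < real n\<close> by (simp add: field_simps)
  have "real q / n < \<xi> + 1 / n" using q \<open>0 < real n\<close> by (simp add: field_simps)
  then have q_le: "real q / n \<le> b" using gap by simp
  have "1 \<le> q" using q pos by simp
  have "real q / n \<le> 1" using q_le b by linarith
  then have "q \<le> n" using \<open>0 < real n\<close> by (simp add: divide_le_eq_1)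
  have "integral {0..\<xi>} w \<le> integral {0..real q / n} w"
    using \<xi> \<xi>_le q_le w0
    by (intro integral_subset_le integrable_on_subinterval[OF w]) auto
  also have "\<dots> \<le> (\<Sum>i<q. w (real i / n)) / n + real q * e / n"
    using q_le n by (intro integral_le_left_Riemann_sum integrable_on_subinterval[OF w] modulus) auto
  also have "real q * e / n \<le> e"
    using \<open>q \<le> n\<close> \<open>0 < real n\<close> e by (simp add: field_simps mult_left_mono)
  also have "(\<Sum>i<q. w (real i / n)) = w 0 + (\<Sum>i\<in>bulk n \<xi>. w (real i / n))"
  proof -
    have "bulk n \<xi> = {1..<q}"
      unfolding q_def using \<xi>_le q_le b by (intro bulk_eq_atLeastLessThan) linarith
    then show ?thesis using \<open>1 \<le> q\<close> by (simp add: lessThan_atLeast0 sum.atLeast_Suc_lessThan)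
  qed
  finally show ?thesis by simp
qed

lemma eventually_bulk_Riemann_sum_ge:
  fixes w :: "real \<Rightarrow> real"
  assumes w0: "\<And>x. x \<in> {0..1} \<Longrightarrow> 0 \<le> w x" and w: "w integrable_on {0..1}"
    and w1: "integral {0..1} w = 1" and wc: "continuous_on {0..<1} w" and \<eta>: "\<eta> > 0"
  obtains \<xi> where "0 < \<xi>" "\<xi> < 1"
    "\<forall>\<^sub>F n in sequentially. 1 - \<eta> \<le> (\<Sum>i\<in>bulk n \<xi>. w (real i / n)) / n"
proof -
  obtain \<xi> where \<xi>: "0 < \<xi>" "\<xi> < 1" and mass: "1 - \<eta> / 3 < integral {0..\<xi>} w"
    using exists_integral_initial_gt[OF w, of "\<eta> / 3"] \<eta> w1 by auto
  \<comment> \<open>w need not be continuous at 1, so Riemann sums are only compared on [0, b] with b < 1.\<close>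
  define b where "b = (1 + \<xi>) / 2"
  have b: "\<xi> < b" "b < 1" using \<xi> by (auto simp: b_def)
  have "uniformly_continuous_on {0..b} w"
    using b by (intro compact_uniformly_continuous continuous_on_subset[OF wc]) auto
  then obtain d where d: "d > 0"
    and uc: "\<And>x y. x \<in> {0..b} \<Longrightarrow> y \<in> {0..b} \<Longrightarrow> dist x y < d \<Longrightarrow> dist (w x) (w y) < \<eta> / 3"
    using \<eta> unfolding uniformly_continuous_on_def by (metis divide_pos_pos zero_less_numeral)
  have "\<forall>\<^sub>F n in sequentially. 1 / real n < min d (b - \<xi>)"
    using b d by (intro order_tendstoD(2)[OF lim_inverse_n']) auto
  moreover have "\<forall>\<^sub>F n in sequentially. 1 / real n * \<bar>w 0\<bar> < \<eta> / 3"
    using \<eta> by (intro order_tendstoD(2)[OF tendsto_mult_left_zero[OF lim_inverse_n']]) auto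
  ultimately have "\<forall>\<^sub>F n in sequentially. 1 - \<eta> \<le> (\<Sum>i\<in>bulk n \<xi>. w (real i / n)) / n"
    using eventually_ge_at_top[of 1]
  proof eventually_elim
    case (elim n)
    have "integral {0..\<xi>} w \<le> (w 0 + (\<Sum>i\<in>bulk n \<xi>. w (real i / n))) / n + \<eta> / 3"
    proof (rule integral_le_bulk_Riemann_sum)
      show "w x \<le> w y + \<eta> / 3" if "x \<in> {0..b}" "y \<in> {0..b}" "\<bar>x - y\<bar> \<le> 1 / n" for x y
      proof -
        have "\<bar>w x - w y\<bar> < \<eta> / 3"
          using uc[OF that(1,2)] that(3) elim(1) by (simp add: dist_real_def)
        then show ?thesis by linarith
      qed
    qed (use w0 b \<xi> \<eta> elim in \<open>auto intro: integrable_on_subinterval[OF w]\<close>)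
    moreover have "w 0 / n \<le> 1 / real n * \<bar>w 0\<bar>" by (simp add: divide_right_mono)
    ultimately show ?case using mass elim(2) unfolding add_divide_distrib by linarith
  qed
  with \<xi> show ?thesis by (rule that)
qed

section \<open>Vanishing dispersion\<close>

lemma pre_chaotic_bulk:
  assumes "pre_chaotic w \<tau>" "0 < \<xi>" "\<xi> < 1"
  obtains C where "C \<ge> 0" and "\<And>\<epsilon>. \<epsilon> > 0 \<Longrightarrow> \<forall>\<^sub>F n in sequentially. \<forall>j\<in>bulk n \<xi>. \<forall>k\<in>bulk n \<xi>.
      \<bar>n * mean_coord (\<tau> n) j - w (real j / n)\<bar> < \<epsilon> \<and> var_coord (\<tau> n) j \<le> C * \<epsilon> / n
      \<and> (j \<noteq> k \<longrightarrow> \<bar>cov_coord (\<tau> n) j k\<bar> \<le> C * \<epsilon> / (real n)\<^sup>2)"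
proof -
  obtain C where C: "\<forall>\<epsilon>>0. \<exists>N::nat. \<forall>n>N. \<forall>j k.
      1 \<le> j \<and> 1 \<le> k \<and> real j < real n * \<xi> \<and> real k < real n * \<xi> \<longrightarrow>
        \<bar>real n * mean_coord (\<tau> n) j - w (real j / real n)\<bar> < \<epsilon>
      \<and> var_coord (\<tau> n) j \<le> C * \<epsilon> / real n
      \<and> (j \<noteq> k \<longrightarrow> \<bar>cov_coord (\<tau> n) j k\<bar> \<le> C * \<epsilon> / (real n)\<^sup>2)"
    using assms unfolding pre_chaotic_def by blast
  show ?thesis
  proof (rule that[of "max C 0"])
    fix \<epsilon> :: real assume "\<epsilon> > 0"
    then obtain N where N: "\<forall>n>N. \<forall>j k.
      1 \<le> j \<and> 1 \<le> k \<and> real j < real n * \<xi> \<and> real k < real n * \<xi> \<longrightarrow>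
        \<bar>real n * mean_coord (\<tau> n) j - w (real j / real n)\<bar> < \<epsilon>
      \<and> var_coord (\<tau> n) j \<le> C * \<epsilon> / real n
      \<and> (j \<noteq> k \<longrightarrow> \<bar>cov_coord (\<tau> n) j k\<bar> \<le> C * \<epsilon> / (real n)\<^sup>2)"
      using C by blast
    have mono: "C * \<epsilon> / x \<le> max C 0 * \<epsilon> / x" if "x \<ge> 0" for x :: real
      using \<open>\<epsilon> > 0\<close> that by (intro divide_right_mono mult_right_mono) auto
    show "\<forall>\<^sub>F n in sequentially. \<forall>j\<in>bulk n \<xi>. \<forall>k\<in>bulk n \<xi>.
      \<bar>n * mean_coord (\<tau> n) j - w (real j / n)\<bar> < \<epsilon> \<and> var_coord (\<tau> n) j \<le> max C 0 * \<epsilon> / n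
      \<and> (j \<noteq> k \<longrightarrow> \<bar>cov_coord (\<tau> n) j k\<bar> \<le> max C 0 * \<epsilon> / (real n)\<^sup>2)"
      unfolding eventually_sequentially
    proof (intro exI allI impI ballI)
      fix n j k assume "Suc N \<le> n" "j \<in> bulk n \<xi>" "k \<in> bulk n \<xi>"
      then have "N < n" "1 \<le> j \<and> 1 \<le> k \<and> real j < real n * \<xi> \<and> real k < real n * \<xi>"
        by (auto simp: bulk_def)
      then show "\<bar>n * mean_coord (\<tau> n) j - w (real j / n)\<bar> < \<epsilon> \<and> var_coord (\<tau> n) j \<le> max C 0 * \<epsilon> / n
        \<and> (j \<noteq> k \<longrightarrow> \<bar>cov_coord (\<tau> n) j k\<bar> \<le> max C 0 * \<epsilon> / (real n)\<^sup>2)"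
        using N[rule_format, of n j k] mono[of n] mono[of "(real n)\<^sup>2"] by auto
    qed
  qed simp
qed

lemma exists_sqrt_le:
  fixes C \<eta> s :: real
  assumes "0 \<le> C" "0 < \<eta>" "0 < s"
  obtains \<epsilon> where "0 < \<epsilon>" "\<epsilon> \<le> \<eta>" "sqrt (2 * (C * \<epsilon>)) \<le> s"
proof
  define \<epsilon> where "\<epsilon> = min \<eta> (s\<^sup>2 / (2 * C + 1))"
  show "0 < \<epsilon>" "\<epsilon> \<le> \<eta>" using assms by (auto simp: \<epsilon>_def)
  have "\<epsilon> \<le> s\<^sup>2 / (2 * C + 1)"
    unfolding \<epsilon>_def by (rule min.cobounded2)
  then have "\<epsilon> * (2 * C + 1) \<le> s\<^sup>2"
    using assms(1) by (simp add: pos_le_divide_eq)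
  then show "sqrt (2 * (C * \<epsilon>)) \<le> s"
    using assms \<open>0 < \<epsilon>\<close> by (intro real_le_lsqrt) (auto simp: algebra_simps)
qed

lemma eventually_expectation_dispersion_le:
  fixes as :: "nat \<Rightarrow> real" and w :: "real \<Rightarrow> real" and \<tau> :: "nat \<Rightarrow> (nat \<Rightarrow> real) measure"
    and \<eta> :: real
  assumes a: "\<And>n. 0 \<le> as n \<and> as n \<le> 2"
    and w0: "\<And>x. x \<in> {0..1} \<Longrightarrow> 0 \<le> w x" and w: "w integrable_on {0..1}"
    and w1: "integral {0..1} w = 1" and wc: "continuous_on {0..<1} w"
    and law: "\<And>n. n \<ge> 1 \<Longrightarrow> simplex_law (\<tau> n) n"
    and chaotic: "pre_chaotic w \<tau>"
    and \<eta>: "\<eta> > 0"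
  shows "\<forall>\<^sub>F n in sequentially. (\<integral>z. dispersion (as n) n (\<tau> n) z \<partial>\<tau> n) \<le> 5 * \<eta>"
proof -
  obtain \<xi> where \<xi>: "0 < \<xi>" "\<xi> < 1"
    and Riemann: "\<forall>\<^sub>F n in sequentially. 1 - \<eta> \<le> (\<Sum>i\<in>bulk n \<xi>. w (real i / n)) / n"
    using eventually_bulk_Riemann_sum_ge[OF w0 w w1 wc \<eta>] by blast
  obtain C where C: "C \<ge> 0" and bounds: "\<And>\<epsilon>. \<epsilon> > 0 \<Longrightarrow> \<forall>\<^sub>F n in sequentially. \<forall>j\<in>bulk n \<xi>. \<forall>k\<in>bulk n \<xi>.
      \<bar>n * mean_coord (\<tau> n) j - w (real j / n)\<bar> < \<epsilon> \<and> var_coord (\<tau> n) j \<le> C * \<epsilon> / n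
      \<and> (j \<noteq> k \<longrightarrow> \<bar>cov_coord (\<tau> n) j k\<bar> \<le> C * \<epsilon> / (real n)\<^sup>2)"
    using pre_chaotic_bulk[OF chaotic \<xi>] by blast
  obtain \<epsilon> where \<epsilon>: "0 < \<epsilon>" "\<epsilon> \<le> \<eta>" and "sqrt (2 * (C * \<epsilon>)) \<le> \<eta> * (1 - \<xi>)"
    using exists_sqrt_le[OF C \<eta>, of "\<eta> * (1 - \<xi>)"] \<xi> \<eta> by auto
  then have fluctuation: "sqrt (2 * (C * \<epsilon>)) / (1 - \<xi>) \<le> \<eta>"
    using \<xi> by (simp add: pos_divide_le_eq)
  show ?thesis
    using bounds[OF \<open>0 < \<epsilon>\<close>] Riemann eventually_ge_at_top[of 1]
  proof eventually_elim
    case (elim n)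
    have mean: "\<bar>n * mean_coord (\<tau> n) j - w (real j / n)\<bar> < \<epsilon>" if "j \<in> bulk n \<xi>" for j
      using elim(1) that by blast
    have var: "var_coord (\<tau> n) j \<le> C * \<epsilon> / n" if "j \<in> bulk n \<xi>" for j
      using elim(1) that by blast
    have cov: "\<bar>cov_coord (\<tau> n) j k\<bar> \<le> C * \<epsilon> / (real n)\<^sup>2"
      if "j \<in> bulk n \<xi>" "k \<in> bulk n \<xi>" "j \<noteq> k" for j k
      using elim(1) that by blast
    have "(\<integral>z. dispersion (as n) n (\<tau> n) z \<partial>\<tau> n)
        \<le> sqrt (2 * (C * \<epsilon>)) / (1 - \<xi>) + 2 * (1 + \<epsilon> - (\<Sum>i\<in>bulk n \<xi>. w (real i / n)) / n)"
      using a[of n] C \<epsilon> by (intro simplex_law.expectation_dispersion_le_Riemann_sum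
          [OF law[OF elim(3)] elim(3) _ _ \<xi>(2) _ _ mean var cov]) auto
    also have "\<dots> \<le> \<eta> + 2 * (2 * \<eta>)"
      using fluctuation elim(2) \<epsilon> by (intro add_mono mult_left_mono) auto
    finally show ?case by simp
  qed
qed

lemma expectation_dispersion_tendsto_zero:
  fixes as :: "nat \<Rightarrow> real" and w :: "real \<Rightarrow> real" and \<tau> :: "nat \<Rightarrow> (nat \<Rightarrow> real) measure"
  assumes a: "\<And>n. 0 \<le> as n \<and> as n \<le> 2"
    and w0: "\<And>x. x \<in> {0..1} \<Longrightarrow> 0 \<le> w x" and w: "w integrable_on {0..1}"
    and w1: "integral {0..1} w = 1" and wc: "continuous_on {0..<1} w"
    and law: "\<And>n. n \<ge> 1 \<Longrightarrow> simplex_law (\<tau> n) n"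
    and chaotic: "pre_chaotic w \<tau>"
  shows "(\<lambda>n. \<integral>z. dispersion (as n) n (\<tau> n) z \<partial>\<tau> n) \<longlonglongrightarrow> 0"
proof (rule order_tendstoI)
  fix r :: real assume "r < 0"
  have "0 \<le> (\<integral>z. dispersion (as n) n (\<tau> n) z \<partial>\<tau> n)" for n
    by (intro integral_nonneg_AE AE_I2 dispersion_nonneg)
  then show "\<forall>\<^sub>F n in sequentially. r < (\<integral>z. dispersion (as n) n (\<tau> n) z \<partial>\<tau> n)"
    using \<open>r < 0\<close> by (intro always_eventually allI) (rule less_le_trans)
next
  fix r :: real assume "0 < r"
  then have "\<forall>\<^sub>F n in sequentially. (\<integral>z. dispersion (as n) n (\<tau> n) z \<partial>\<tau> n) \<le> 5 * (r / 6)"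
    using eventually_expectation_dispersion_le[OF a w0 w w1 wc law chaotic, of "r / 6"] by simp
  then show "\<forall>\<^sub>F n in sequentially. (\<integral>z. dispersion (as n) n (\<tau> n) z \<partial>\<tau> n) < r"
    by eventually_elim (use \<open>0 < r\<close> in simp)
qed

theorem lemma3p9:
  fixes \<alpha> :: real and \<alpha>s :: "nat \<Rightarrow> real" and w :: "real \<Rightarrow> real"
    and \<tau> :: "nat \<Rightarrow> (nat \<Rightarrow> real) measure" and \<delta> :: real
  assumes "0 < \<alpha>" "\<alpha> < 2"
    and "\<And>n. 0 < \<alpha>s n \<and> \<alpha>s n < 2"
    and "\<alpha>s \<longlonglongrightarrow> \<alpha>"
    and "\<And>x. x \<in> {0..1} \<Longrightarrow> 0 \<le> w x"
    and "set_integrable lborel {0..1} w"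
    and "(LINT x:{0..1}|lborel. w x) = 1"
    and "continuous_on {0..<1} w"
    and "\<And>n. n \<ge> 1 \<Longrightarrow> prob_space (\<tau> n)"
    and "\<And>n. n \<ge> 1 \<Longrightarrow> sets (\<tau> n) = sets (PiM {1..n} (\<lambda>_. borel))"
    and "\<And>n. n \<ge> 1 \<Longrightarrow> (AE z in \<tau> n. z \<in> simplex1 n)"
    and "pre_chaotic w \<tau>"
    and "\<delta> > 0"
  shows "(\<lambda>n. outer_prob (\<tau> n)
            {z \<in> space (\<tau> n).
               W1 (distr unit_leb borel (psi (\<alpha>s n) n z))
                  (distr unit_leb borel (phi (\<alpha>s n) n (\<tau> n))) > ennreal \<delta>})
         \<longlonglongrightarrow> 0"
proof -
  have law: "simplex_law (\<tau> n) n" if "n \<ge> 1" for n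
    using assms(9-11) that by (intro simplex_law.intro simplex_law_axioms.intro) auto
  have "(\<lambda>n. \<integral>z. dispersion (\<alpha>s n) n (\<tau> n) z \<partial>\<tau> n) \<longlonglongrightarrow> 0"
  proof (rule expectation_dispersion_tendsto_zero[OF _ assms(5) _ _ assms(8) law assms(12)])
    show "0 \<le> \<alpha>s n \<and> \<alpha>s n \<le> 2" for n using assms(3)[of n] by simp
    show "w integrable_on {0..1}" "integral {0..1} w = 1"
      using set_borel_integral_eq_integral[OF assms(6)] assms(7) by simp_all
  qed
  then have E: "(\<lambda>n. (\<integral>z. dispersion (\<alpha>s n) n (\<tau> n) z \<partial>\<tau> n) / \<delta>) \<longlonglongrightarrow> 0"
    by (rule tendsto_divide_zero)
  have upper: "\<forall>\<^sub>F n in sequentially. outer_prob (\<tau> n)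
            {z \<in> space (\<tau> n).
               W1 (distr unit_leb borel (psi (\<alpha>s n) n z))
                  (distr unit_leb borel (phi (\<alpha>s n) n (\<tau> n))) > ennreal \<delta>}
      \<le> (\<integral>z. dispersion (\<alpha>s n) n (\<tau> n) z \<partial>\<tau> n) / \<delta>"
    using eventually_ge_at_top[of 1]
  proof eventually_elim
    case (elim n)
    show ?case using law[OF elim] elim assms(13) by (rule simplex_law.outer_prob_W1_gt_le)
  qed
  show ?thesis
    by (rule tendsto_sandwich[OF _ upper tendsto_const E]) (simp add: outer_prob_nonneg)
qed

end
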